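(* A $3$-stick unknot diagram $\mathcal{U}$ (three edges of nonzero length) is a non-degenerate triangle if and only if the corresponding folded ribbon unknot $\mathcal{U}_{w,F}$ is a Möbius band.
   Context: A non-degenerate triangle is one whose three vertices are not collinear. For width $w>0$, the folded ribbon $\mathcal{U}_{w,F}$ corresponding to a polygonal diagram $\mathcal{U}$ is a flat strip of width $w$ centred on $\mathcal{U}$, folded at each vertex along a fold line through the vertex perpendicular to the bisector of the angle between the adjacent edges (a piecewise-linear immersion of an annulus or Möbius band into the plane whose only singularities are the fold lines); at a vertex with angle $\pi$ between the adjacent edges there is no fold and the two edges behave as one. $F$ denotes the folding information (which layer is on top at each fold). *)

theory Defs
  imports "HOL-Analysis.Analysis"
begin

text \<open>A closed polygonal diagram with n sticks is a list vs of n vertices;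
  vertex i is vs ! (i mod n), the edges join consecutive vertices cyclically.\<close>

definition vtx :: "complex list \<Rightarrow> nat \<Rightarrow> complex" where
  "vtx vs i = vs ! (i mod length vs)"

definition nonzero_edges :: "complex list \<Rightarrow> bool" where
  "nonzero_edges vs \<longleftrightarrow> (\<forall>i < length vs. vtx vs i \<noteq> vtx vs (Suc i))"

text \<open>Angle pi between the two edges at vertex p (previous vertex a, next vertex c):
  the two edge rays point in opposite directions. Then there is no fold.\<close>

definition straight_at :: "complex \<Rightarrow> complex \<Rightarrow> complex \<Rightarrow> bool" where
  "straight_at a p c \<longleftrightarrow> sgn (a - p) = - sgn (c - p)"

text \<open>Effect of the fold at vertex p on transverse (ribbon-width) vectors:
  reflection in the fold line, i.e. the line through p perpendicular to the
  bisector b of the angle between the adjacent edges; identity if the angle is pi.\<close>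

definition fold_map :: "complex \<Rightarrow> complex \<Rightarrow> complex \<Rightarrow> complex \<Rightarrow> complex" where
  "fold_map a p c x =
     (if straight_at a p c then x
      else (let b = sgn (a - p) + sgn (c - p)
            in x - (2 * (x \<bullet> b) / (b \<bullet> b)) *\<^sub>R b))"

text \<open>Transport of the transverse direction of the ribbon once around the diagram,
  starting on edge 0 (from vertex 0 to vertex 1) and passing the folds at
  vertices 1, 2, ..., n (= vertex 0).\<close>

definition ribbon_transport :: "complex list \<Rightarrow> complex \<Rightarrow> complex" where
  "ribbon_transport vs x =
     foldl (\<lambda>y i. fold_map (vtx vs (i - 1)) (vtx vs i) (vtx vs (Suc i)) y) x
           [1..<Suc (length vs)]"

text \<open>The folded ribbon is the strip [0,L] x [-w/2,w/2] (L = perimeter) mapped along the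
  diagram, with its two ends glued. Following the unit normal of edge 0 once around,
  it returns to plus or minus itself; the ribbon is a Moebius band iff it returns
  reversed (ends glued by t to -t), and an annulus otherwise. This is independent of
  the width w and of the folding information F.\<close>

definition folded_ribbon_is_moebius :: "complex list \<Rightarrow> bool" where
  "folded_ribbon_is_moebius vs \<longleftrightarrow>
     (let n0 = \<i> * sgn (vtx vs 1 - vtx vs 0)
      in ribbon_transport vs n0 = - n0)"

end

theory Submission
  imports Defs
begin

text \<open>Follow the unit normal \<open>\<i> * sgn e\<close> of each edge \<open>e\<close> across the fold at its end vertex.
  If \<open>u\<close> and \<open>v\<close> are the unit directions of the two edges leaving that vertex, the fold is
  the reflection \<open>x \<mapsto> - u * v * cnj x\<close>, which sends the normal of the incoming edge to
  minus the normal of the outgoing one; at a straight vertex nothing happens. So the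
  transported normal returns reversed, i.e. the ribbon is a Moebius band, iff the number of
  genuine folds is odd. A non-degenerate triangle has three folds. A degenerate one with
  distinct vertices has exactly one vertex strictly between the other two, which is
  straight, so it has two.\<close>

lemma reflection_eq_cnj:
  fixes z b :: complex
  assumes "b \<noteq> 0"
  shows "z - (2 * (z \<bullet> b) / (b \<bullet> b)) *\<^sub>R b = - cnj z * b / cnj b"
proof -
  have "complex_of_real (2 * (z \<bullet> b)) = z * cnj b + cnj z * b"
    by (simp add: complex_eq_iff inner_complex_def algebra_simps)
  moreover have "complex_of_real (b \<bullet> b) = b * cnj b"
    by (simp add: complex_eq_iff inner_complex_def power2_eq_square)
  ultimately show ?thesis
    using assms by (simp add: scaleR_conv_of_real field_simps)
qed

lemma cnj_sgn_mult_sgn: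
  fixes z :: complex
  assumes "z \<noteq> 0"
  shows "cnj (sgn z) * sgn z = 1"
  using assms complex_norm_square[of "sgn z"] by (simp add: norm_sgn mult.commute)

lemma fold_map_scaleR: "fold_map a p c (s *\<^sub>R x) = s *\<^sub>R fold_map a p c x"
  by (simp add: fold_map_def Let_def scaleR_diff_right inner_scaleR_left)

lemma fold_map_eq_cnj:
  assumes "a \<noteq> p" "c \<noteq> p" "\<not> straight_at a p c"
  shows "fold_map a p c x = - (sgn (a - p) * sgn (c - p)) * cnj x"
proof -
  define u v where "u = sgn (a - p)" and "v = sgn (c - p)"
  have u_unit: "cnj u * u = 1" and v_unit: "cnj v * v = 1"
    using assms(1,2) by (simp_all add: u_def v_def cnj_sgn_mult_sgn)
  have "u + v \<noteq> 0"
    using assms(3) by (auto simp: straight_at_def u_def v_def add_eq_0_iff2)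
  moreover have "cnj (u + v) * (u * v) = u + v"
    using u_unit v_unit by (simp add: algebra_simps)
  ultimately have "(u + v) / cnj (u + v) = u * v"
    by (metis complex_cnj_zero_iff divide_eq_eq mult.commute)
  have "fold_map a p c x = x - (2 * (x \<bullet> (u + v)) / ((u + v) \<bullet> (u + v))) *\<^sub>R (u + v)"
    using assms(3) by (simp add: fold_map_def Let_def u_def v_def)
  also have "\<dots> = - cnj x * (u + v) / cnj (u + v)"
    using \<open>u + v \<noteq> 0\<close> by (rule reflection_eq_cnj)
  also have "\<dots> = - cnj x * ((u + v) / cnj (u + v))"
    by (rule times_divide_eq_right[symmetric])
  also have "\<dots> = - (u * v) * cnj x"
    unfolding \<open>(u + v) / cnj (u + v) = u * v\<close> by simp
  finally show ?thesis
    by (simp only: u_def v_def)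
qed

lemma fold_map_edge_normal:
  assumes "a \<noteq> p" "c \<noteq> p"
  shows "fold_map a p c (\<i> * sgn (p - a))
           = (if straight_at a p c then 1 else - 1) *\<^sub>R (\<i> * sgn (c - p))"
proof -
  define u v where "u = sgn (a - p)" and "v = sgn (c - p)"
  have "sgn (p - a) = - u"
    unfolding u_def by (metis minus_diff_eq sgn_minus)
  show ?thesis
  proof (cases "straight_at a p c")
    case True
    then show ?thesis
      using \<open>sgn (p - a) = - u\<close> by (simp add: fold_map_def straight_at_def u_def v_def)
  next
    case False
    have "cnj u * u = 1"
      using assms(1) by (simp add: u_def cnj_sgn_mult_sgn)
    have "fold_map a p c (\<i> * sgn (p - a)) = - (u * v) * (\<i> * cnj u)"
      using assms False \<open>sgn (p - a) = - u\<close> by (simp add: fold_map_eq_cnj u_def v_def)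
    also have "\<dots> = - \<i> * v * (cnj u * u)"
      by (simp add: algebra_simps)
    finally show ?thesis
      using False \<open>cnj u * u = 1\<close> by (simp add: v_def)
  qed
qed

lemma nonzero_edges_vtx_Suc:
  assumes "nonzero_edges vs" "vs \<noteq> []"
  shows "vtx vs i \<noteq> vtx vs (Suc i)"
proof -
  have "vtx vs i = vtx vs (i mod length vs)" "vtx vs (Suc i) = vtx vs (Suc (i mod length vs))"
    by (simp_all add: vtx_def mod_Suc_eq)
  moreover have "i mod length vs < length vs"
    using assms(2) by simp
  ultimately show ?thesis
    using assms(1) unfolding nonzero_edges_def by metis
qed

definition folds_at :: "complex list \<Rightarrow> nat \<Rightarrow> bool" where
  "folds_at vs i \<longleftrightarrow> \<not> straight_at (vtx vs (i - 1)) (vtx vs i) (vtx vs (Suc i))"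

definition fold_count :: "complex list \<Rightarrow> nat" where
  "fold_count vs = length (filter (folds_at vs) [1..<Suc (length vs)])"

lemma foldl_fold_map_edge_normal:
  assumes "\<And>i. vtx vs i \<noteq> vtx vs (Suc i)"
  shows "foldl (\<lambda>y i. fold_map (vtx vs (i - 1)) (vtx vs i) (vtx vs (Suc i)) y)
           (\<i> * sgn (vtx vs 1 - vtx vs 0)) [1..<Suc k]
         = (- 1) ^ length (filter (folds_at vs) [1..<Suc k]) *\<^sub>R (\<i> * sgn (vtx vs (Suc k) - vtx vs k))"
proof (induction k)
  case 0
  show ?case by simp
next
  case (Suc k)
  let ?m = "length (filter (folds_at vs) [1..<Suc k])"
  have "vtx vs k \<noteq> vtx vs (Suc k)" "vtx vs (Suc (Suc k)) \<noteq> vtx vs (Suc k)"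
    using assms by metis+
  note step = fold_map_edge_normal[OF this]
  have "foldl (\<lambda>y i. fold_map (vtx vs (i - 1)) (vtx vs i) (vtx vs (Suc i)) y)
          (\<i> * sgn (vtx vs 1 - vtx vs 0)) [1..<Suc (Suc k)]
        = fold_map (vtx vs k) (vtx vs (Suc k)) (vtx vs (Suc (Suc k)))
            ((- 1) ^ ?m *\<^sub>R (\<i> * sgn (vtx vs (Suc k) - vtx vs k)))"
    using Suc.IH by simp
  also have "\<dots> = (- 1) ^ (?m + of_bool (folds_at vs (Suc k)))
                     *\<^sub>R (\<i> * sgn (vtx vs (Suc (Suc k)) - vtx vs (Suc k)))"
    unfolding fold_map_scaleR step by (simp add: folds_at_def)
  also have "?m + of_bool (folds_at vs (Suc k)) = length (filter (folds_at vs) [1..<Suc (Suc k)])"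
    by simp
  finally show ?case .
qed

lemma ribbon_transport_edge_normal:
  assumes "nonzero_edges vs" "vs \<noteq> []"
  shows "ribbon_transport vs (\<i> * sgn (vtx vs 1 - vtx vs 0))
           = (- 1) ^ fold_count vs *\<^sub>R (\<i> * sgn (vtx vs 1 - vtx vs 0))"
proof -
  let ?n = "length vs"
  have "Suc ?n mod ?n = 1 mod ?n"
    using mod_Suc_eq[of ?n ?n] by simp
  then have ends: "vtx vs (Suc ?n) = vtx vs 1" "vtx vs ?n = vtx vs 0"
    by (simp_all add: vtx_def)
  have "ribbon_transport vs (\<i> * sgn (vtx vs 1 - vtx vs 0))
          = (- 1) ^ fold_count vs *\<^sub>R (\<i> * sgn (vtx vs (Suc ?n) - vtx vs ?n))"
    unfolding ribbon_transport_def fold_count_def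
    by (rule foldl_fold_map_edge_normal[OF nonzero_edges_vtx_Suc[OF assms]])
  then show ?thesis
    unfolding ends .
qed

lemma folded_ribbon_is_moebius_iff_odd_fold_count:
  assumes "nonzero_edges vs" "vs \<noteq> []"
  shows "folded_ribbon_is_moebius vs \<longleftrightarrow> odd (fold_count vs)"
proof -
  have "\<i> * sgn (vtx vs 1 - vtx vs 0) \<noteq> 0"
    using nonzero_edges_vtx_Suc[OF assms, of 0] by (simp add: sgn_eq_0_iff)
  then show ?thesis
    using ribbon_transport_edge_normal[OF assms]
    by (cases "even (fold_count vs)") (simp_all add: folded_ribbon_is_moebius_def)
qed

lemma straight_at_on_line:
  fixes p d :: complex
  assumes "d \<noteq> 0"
  shows "straight_at (p + r *\<^sub>R d) (p + s *\<^sub>R d) (p + t *\<^sub>R d) \<longleftrightarrow> sgn (r - s) = - sgn (t - s)"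
proof -
  have "straight_at (p + r *\<^sub>R d) (p + s *\<^sub>R d) (p + t *\<^sub>R d)
          \<longleftrightarrow> sgn (r - s) *\<^sub>R sgn d = (- sgn (t - s)) *\<^sub>R sgn d"
    by (simp add: straight_at_def sgn_scaleR flip: scaleR_diff_left)
  also have "\<dots> \<longleftrightarrow> sgn (r - s) = - sgn (t - s)"
    using assms by (metis scaleR_cancel_right sgn_eq_0_iff)
  finally show ?thesis .
qed

lemma scaleR_norm_sgn: "norm x *\<^sub>R sgn x = (x :: 'a :: real_normed_vector)"
  by (cases "x = 0") (simp_all add: sgn_div_norm)

lemma straight_at_imp_collinear:
  fixes a p c :: complex
  assumes "straight_at a p c"
  shows "collinear {a, p, c}"
proof -
  have "a = p + cmod (a - p) *\<^sub>R sgn (a - p)"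
    by (simp add: scaleR_norm_sgn)
  moreover have "c = p + (- cmod (c - p)) *\<^sub>R sgn (a - p)"
    using assms scaleR_norm_sgn[of "c - p"] by (simp add: straight_at_def)
  moreover have "p = p + 0 *\<^sub>R sgn (a - p)"
    by simp
  ultimately show ?thesis
    unfolding collinear_alt by blast
qed

lemma fold_count_triangle:
  "fold_count [a, b, c]
     = of_bool (\<not> straight_at a b c) + of_bool (\<not> straight_at b c a) + of_bool (\<not> straight_at c a b)"
  by (simp add: fold_count_def folds_at_def vtx_def upt_rec)

lemma fold_count_collinear_triangle:
  fixes a b c :: complex
  assumes "a \<noteq> b" "b \<noteq> c" "c \<noteq> a" "collinear {a, b, c}"
  shows "fold_count [a, b, c] = 2"
proof -
  have "collinear {a, c, b}"
    using assms(4) by (simp add: insert_commute)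
  then obtain u where "c = u *\<^sub>R a + (1 - u) *\<^sub>R b"
    using assms(1) unfolding collinear_3_expand by blast
  define d where "d = a - b"
  have d: "d \<noteq> 0"
    using assms(1) by (simp add: d_def)
  have on_line: "b + 1 *\<^sub>R d = a" "b + 0 *\<^sub>R d = b" "b + u *\<^sub>R d = c"
    using \<open>c = _\<close> by (simp_all add: d_def algebra_simps)
  have "u \<noteq> 0" "u \<noteq> 1"
    using assms(2,3) on_line by auto
  moreover note
    straight_at_on_line[OF d, of b 1 0 u, unfolded on_line]
    straight_at_on_line[OF d, of b 0 u 1, unfolded on_line]
    straight_at_on_line[OF d, of b u 1 0, unfolded on_line]
  ultimately show ?thesis
    unfolding fold_count_triangle by (auto simp: sgn_if)
qed

theorem lemma5p1:
  fixes a b c :: complex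
  assumes "nonzero_edges [a, b, c]"
  shows "\<not> collinear {a, b, c} \<longleftrightarrow> folded_ribbon_is_moebius [a, b, c]"
proof -
  have "\<forall>i < 3. vtx [a, b, c] i \<noteq> vtx [a, b, c] (Suc i)"
    using assms by (simp add: nonzero_edges_def)
  then have "a \<noteq> b" "b \<noteq> c" "c \<noteq> a"
    unfolding numeral_3_eq_3 All_less_Suc by (simp_all add: vtx_def)
  have moebius: "folded_ribbon_is_moebius [a, b, c] \<longleftrightarrow> odd (fold_count [a, b, c])"
    using assms by (simp add: folded_ribbon_is_moebius_iff_odd_fold_count)
  show ?thesis
  proof (cases "collinear {a, b, c}")
    case True
    with \<open>a \<noteq> b\<close> \<open>b \<noteq> c\<close> \<open>c \<noteq> a\<close> show ?thesis
      by (simp add: moebius fold_count_collinear_triangle)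
  next
    case False
    moreover have "collinear {b, c, a} = collinear {a, b, c}" "collinear {c, a, b} = collinear {a, b, c}"
      by (simp_all add: insert_commute)
    ultimately have "\<not> straight_at a b c" "\<not> straight_at b c a" "\<not> straight_at c a b"
      by (metis straight_at_imp_collinear)+
    with False show ?thesis
      by (simp add: moebius fold_count_triangle)
  qed
qed

end
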